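(* If MAPTree is stopped early (by the time budget) after at least one iteration of its main loop, its output is a minimum-cost solution graph among all solution graphs of $\mathcal G_{\mathcal X,\mathcal Y}$ contained in the explored node set $\mathcal G'$.
   Context: Let $x_1,\dots,x_N\in\{0,1\}^F$ be a binary dataset $\mathcal X$ with labels $\mathcal Y\in\{0,1\}^N$, $[N]=\{1,\dots,N\}$. For $\mathcal I\subseteq[N]$, $f\in[F]$, $k\in\{0,1\}$ let $\mathcal I|_{f=k}=\{i\in\mathcal I:(x_i)_f=k\}$, $c^k(\mathcal I)=|\{i\in\mathcal I:y_i=k\}|$, $\mathcal V(\mathcal I)=\{f:\mathcal I|_{f=0}\neq\emptyset\text{ and }\mathcal I|_{f=1}\neq\emptyset\}$. Fix $\rho^1,\rho^0>0$, $\alpha\in(0,1)$, $\beta\ge0$; $\ell_{\rm leaf}(c^1,c^0)=B(c^1+\rho^1,c^0+\rho^0)/B(\rho^1,\rho^0)$ ($B$ the Beta function), $p_{\rm split}(d)=\alpha(1+d)^{-\beta}$, $p_{\rm leaf}(d,\mathcal I)=1$ if $\mathcal V(\mathcal I)=\emptyset$ else $1-p_{\rm split}(d)$, $p_{\rm inner}(d,\mathcal I)=0$ if $\mathcal V(\mathcal I)=\emptyset$ else $p_{\rm split}(d)/|\mathcal V(\mathcal I)|$; $-\log0=+\infty$, and a minimum over an empty set is $+\infty$. Graph $\mathcal G=\mathcal G_{\mathcal X,\mathcal Y}$: for nonempty $\mathcal I\subseteq[N]$, $d\in\{0,\dots,F\}$, an OR node $o_{\mathcal I,d}$ with terminal child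 $t_{\mathcal I,d}$ (edge cost $-\log p_{\rm leaf}(d,\mathcal I)-\log\ell_{\rm leaf}(c^1(\mathcal I),c^0(\mathcal I))$); for $d<F$, $f\in\mathcal V(\mathcal I)$, an AND child $a_{\mathcal I,d,f}$ (edge cost $-\log p_{\rm inner}(d,\mathcal I)$) with cost-$0$ edges to $o_{\mathcal I|_{f=0},d+1}$, $o_{\mathcal I|_{f=1},d+1}$; root $r=o_{[N],0}$; only nodes reachable from $r$ kept. A solution graph is a node set $\mathcal S\ni r$, all of whose nodes are reachable from $r$ inside $\mathcal S$, with every AND node of $\mathcal S$ having both children in $\mathcal S$ and every OR node of $\mathcal S$ exactly one child in $\mathcal S$; its cost is the sum of costs of edges $u\to v$ with $u,v\in\mathcal S$. Heuristic: $h(o_{\mathcal I,d})=-\max\{\log\ell_{\rm leaf}(c^1(\mathcal I),c^0(\mathcal I)),\log p_{\rm split}(d)+\log\ell_{\rm leaf}(c^1(\mathcal I),0)+\log\ell_{\rm leaf}(0,c^0(\mathcal I))\}$. MAPTree maintains a node set $\mathcal G'$, a set $\mathcal E$ of expanded OR nodes, and values $LB[u],UB[u]\in\mathbb R\cup\{+\infty\}$ for OR nodes ($UB[u]=+\infty$ until set); for an AND node $a$ with children $o_0,o_1$, $LB[a]=LB[o_0]+LB[o_1]$ and $UB[a]=UB[o_0]+UB[o_1]$. Initialize $\mathcal G'=\{r\}$, $\mathcal E=\emptyset$, $LB[r]=h(r)$, $UB[r]=+\infty$. While $LB[r]<UB[r]$ and time remains: (1) $o:=r$; while $o\in\mathcal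 E$, choose an AND child $a^*$ of $o$ minimizing $\mathrm{cost}(o,a)+LB[a]$, with children $o_0$ (value-0 side) and $o_1$, and set $o:=o_0$ if $UB[o_0]-LB[o_0]>UB[o_1]-LB[o_1]$, else $o:=o_1$. (2) Add $o$ to $\mathcal E$ and its terminal child to $\mathcal G'$; for each AND child $a$ of $o$ with children $o_0,o_1$, add $a,o_0,o_1$ to $\mathcal G'$ and set $LB[o_0]:=h(o_0)$, $LB[o_1]:=h(o_1)$. (3) Starting from $Q=\{o\}$, repeatedly remove from $Q$ an OR node $u$ of maximal depth, compute $v=\min\{\min_a(\mathrm{cost}(u,a)+LB[a]),\mathrm{cost}(u,t_u)\}$ over the AND children $a$ and terminal child $t_u$ of $u$; if $v>LB[u]$, set $LB[u]:=v$ and add to $Q$ every OR node of $\mathcal G'$ that is the parent of an AND node of $\mathcal G'$ having $u$ as child. (4) The same with $UB$ in place of $LB$, updating when $v<UB[u]$. Output $\mathrm{getSolution}(r)$, where for an OR node $u$ with terminal child $t$: if $u$ has no AND child or $\mathrm{cost}(u,t)\le\min_a(\mathrm{cost}(u,a)+UB[a])$, return $\{u,t\}$; else, with $a^*$ attaining the minimum and children $u_0,u_1$, return $\{u,a^*\}\cup\mathrm{getSolution}(u_0)\cup\mathrm{getSolution}(u_1)$. *)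

theory Defs
  imports "HOL-Analysis.Analysis" "HOL-Library.Extended_Real"
begin

text \<open>Samples are indexed by 1..N, features by 1..F; binary values {0,1} are
  represented by False/True (value k corresponds to k = 1).\<close>

record mt_data =
  nN :: nat
  fF :: nat
  xX :: "nat \<Rightarrow> nat \<Rightarrow> bool"
  yY :: "nat \<Rightarrow> bool"
  rho1 :: real
  rho0 :: real
  alpha :: real
  beta :: real

definition restr :: "mt_data \<Rightarrow> nat set \<Rightarrow> nat \<Rightarrow> bool \<Rightarrow> nat set" where
  "restr D I f k = {i \<in> I. xX D i f = k}"

definition cnt :: "mt_data \<Rightarrow> nat set \<Rightarrow> bool \<Rightarrow> nat" where
  "cnt D I k = card {i \<in> I. yY D i = k}"

definition valid_feats :: "mt_data \<Rightarrow> nat set \<Rightarrow> nat set" where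
  "valid_feats D I = {f \<in> {1..fF D}. restr D I f False \<noteq> {} \<and> restr D I f True \<noteq> {}}"

definition l_leaf :: "mt_data \<Rightarrow> nat \<Rightarrow> nat \<Rightarrow> real" where
  "l_leaf D c1 c0 = Beta (real c1 + rho1 D) (real c0 + rho0 D) / Beta (rho1 D) (rho0 D)"

definition p_split :: "mt_data \<Rightarrow> nat \<Rightarrow> real" where
  "p_split D d = alpha D * (1 + real d) powr (- beta D)"

definition p_leaf :: "mt_data \<Rightarrow> nat \<Rightarrow> nat set \<Rightarrow> real" where
  "p_leaf D d I = (if valid_feats D I = {} then 1 else 1 - p_split D d)"

definition p_inner :: "mt_data \<Rightarrow> nat \<Rightarrow> nat set \<Rightarrow> real" where
  "p_inner D d I = (if valid_feats D I = {} then 0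
                    else p_split D d / real (card (valid_feats D I)))"

definition neglog :: "real \<Rightarrow> ereal" where
  "neglog p = (if p = 0 then \<infinity> else ereal (- ln p))"

datatype node = OrN "nat set" nat | TermN "nat set" nat | AndN "nat set" nat nat

fun is_or :: "node \<Rightarrow> bool" where
  "is_or (OrN _ _) = True" | "is_or _ = False"

fun is_and :: "node \<Rightarrow> bool" where
  "is_and (AndN _ _ _) = True" | "is_and _ = False"

fun depth :: "node \<Rightarrow> nat" where
  "depth (OrN _ d) = d" | "depth (TermN _ d) = d" | "depth (AndN _ d _) = d"

fun termch :: "node \<Rightarrow> node" where
  "termch (OrN I d) = TermN I d" | "termch u = u"

fun kid0 :: "mt_data \<Rightarrow> node \<Rightarrow> node" where
  "kid0 D (AndN I d f) = OrN (restr D I f False) (Suc d)" | "kid0 D u = u"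

fun kid1 :: "mt_data \<Rightarrow> node \<Rightarrow> node" where
  "kid1 D (AndN I d f) = OrN (restr D I f True) (Suc d)" | "kid1 D u = u"

text \<open>Edges of the (unrestricted) graph; only nodes reachable from the root are kept.\<close>
inductive gedge :: "mt_data \<Rightarrow> node \<Rightarrow> node \<Rightarrow> bool" for D where
  to_term: "I \<noteq> {} \<Longrightarrow> d \<le> fF D \<Longrightarrow> gedge D (OrN I d) (TermN I d)"
| to_and: "I \<noteq> {} \<Longrightarrow> d < fF D \<Longrightarrow> f \<in> valid_feats D I \<Longrightarrow> gedge D (OrN I d) (AndN I d f)"
| to_kid0: "I \<noteq> {} \<Longrightarrow> d < fF D \<Longrightarrow> f \<in> valid_feats D I \<Longrightarrow>
     gedge D (AndN I d f) (OrN (restr D I f False) (Suc d))"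
| to_kid1: "I \<noteq> {} \<Longrightarrow> d < fF D \<Longrightarrow> f \<in> valid_feats D I \<Longrightarrow>
     gedge D (AndN I d f) (OrN (restr D I f True) (Suc d))"

definition root :: "mt_data \<Rightarrow> node" where
  "root D = OrN {1..nN D} 0"

definition nodes :: "mt_data \<Rightarrow> node set" where
  "nodes D = {v. (gedge D)\<^sup>*\<^sup>* (root D) v}"

definition edgeG :: "mt_data \<Rightarrow> node \<Rightarrow> node \<Rightarrow> bool" where
  "edgeG D u v \<longleftrightarrow> u \<in> nodes D \<and> gedge D u v"

fun cost :: "mt_data \<Rightarrow> node \<Rightarrow> node \<Rightarrow> ereal" where
  "cost D (OrN I d) (TermN _ _) =
     neglog (p_leaf D d I) + neglog (l_leaf D (cnt D I True) (cnt D I False))"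
| "cost D (OrN I d) (AndN _ _ _) = neglog (p_inner D d I)"
| "cost D _ _ = 0"

fun hh :: "mt_data \<Rightarrow> node \<Rightarrow> ereal" where
  "hh D (OrN I d) = ereal (- max (ln (l_leaf D (cnt D I True) (cnt D I False)))
       (ln (p_split D d) + ln (l_leaf D (cnt D I True) 0) + ln (l_leaf D 0 (cnt D I False))))"
| "hh D _ = 0"

definition sol_graph :: "mt_data \<Rightarrow> node set \<Rightarrow> bool" where
  "sol_graph D S \<longleftrightarrow> root D \<in> S \<and> S \<subseteq> nodes D
     \<and> (\<forall>v\<in>S. (\<lambda>x y. edgeG D x y \<and> x \<in> S \<and> y \<in> S)\<^sup>*\<^sup>* (root D) v)
     \<and> (\<forall>a\<in>S. is_and a \<longrightarrow> (\<forall>v. edgeG D a v \<longrightarrow> v \<in> S))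
     \<and> (\<forall>u\<in>S. is_or u \<longrightarrow> (\<exists>!v. edgeG D u v \<and> v \<in> S))"

definition sol_cost :: "mt_data \<Rightarrow> node set \<Rightarrow> ereal" where
  "sol_cost D S = (\<Sum>(u, v) \<in> {(u, v). u \<in> S \<and> v \<in> S \<and> edgeG D u v}. cost D u v)"

record mt_state =
  Gp :: "node set"
  Ex :: "node set"
  LB :: "node \<Rightarrow> ereal"
  UB :: "node \<Rightarrow> ereal"

definition andch :: "mt_data \<Rightarrow> node set \<Rightarrow> node \<Rightarrow> node set" where
  "andch D G' u = {a \<in> G'. edgeG D u a \<and> is_and a}"

definition andval :: "mt_data \<Rightarrow> (node \<Rightarrow> ereal) \<Rightarrow> node \<Rightarrow> ereal" where
  "andval D B a = B (kid0 D a) + B (kid1 D a)"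

definition val :: "mt_data \<Rightarrow> node set \<Rightarrow> (node \<Rightarrow> ereal) \<Rightarrow> node \<Rightarrow> ereal" where
  "val D G' B u = min (INF a\<in>andch D G' u. cost D u a + andval D B a) (cost D u (termch u))"

definition parents :: "mt_data \<Rightarrow> node set \<Rightarrow> node \<Rightarrow> node set" where
  "parents D G' u = {p \<in> G'. is_or p \<and> (\<exists>a\<in>G'. is_and a \<and> edgeG D p a \<and> edgeG D a u)}"

text \<open>One step of the queue-processing loop of steps (3)/(4); better is
  (>) for LB and (<) for UB.\<close>
inductive prop_step :: "mt_data \<Rightarrow> (ereal \<Rightarrow> ereal \<Rightarrow> bool) \<Rightarrow> node set
    \<Rightarrow> node set \<times> (node \<Rightarrow> ereal) \<Rightarrow> node set \<times> (node \<Rightarrow> ereal) \<Rightarrow> bool"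
  for D better G' where
  upd: "u \<in> Q \<Longrightarrow> (\<forall>w\<in>Q. depth w \<le> depth u) \<Longrightarrow> better (val D G' B u) (B u) \<Longrightarrow>
     prop_step D better G' (Q, B) (Q - {u} \<union> parents D G' u, B(u := val D G' B u))"
| noupd: "u \<in> Q \<Longrightarrow> (\<forall>w\<in>Q. depth w \<le> depth u) \<Longrightarrow> \<not> better (val D G' B u) (B u) \<Longrightarrow>
     prop_step D better G' (Q, B) (Q - {u}, B)"

definition propagate :: "mt_data \<Rightarrow> (ereal \<Rightarrow> ereal \<Rightarrow> bool) \<Rightarrow> node set \<Rightarrow> node
    \<Rightarrow> (node \<Rightarrow> ereal) \<Rightarrow> (node \<Rightarrow> ereal) \<Rightarrow> bool" where
  "propagate D better G' x B B' \<longleftrightarrow> (prop_step D better G')\<^sup>*\<^sup>* ({x}, B) ({}, B')"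

text \<open>Step (1): descent from u to an unexpanded OR node o.\<close>
inductive descend :: "mt_data \<Rightarrow> mt_state \<Rightarrow> node \<Rightarrow> node \<Rightarrow> bool" for D st where
  stop: "u \<notin> Ex st \<Longrightarrow> descend D st u u"
| go: "u \<in> Ex st \<Longrightarrow> a \<in> andch D (Gp st) u \<Longrightarrow>
     (\<forall>a'\<in>andch D (Gp st) u. cost D u a + andval D (LB st) a \<le> cost D u a' + andval D (LB st) a') \<Longrightarrow>
     descend D st (if UB st (kid0 D a) - LB st (kid0 D a) > UB st (kid1 D a) - LB st (kid1 D a)
                   then kid0 D a else kid1 D a) x \<Longrightarrow>
     descend D st u x"

definition new_G :: "mt_data \<Rightarrow> mt_state \<Rightarrow> node \<Rightarrow> node set" where
  "new_G D st x = Gp st \<union> {termch x}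
     \<union> (\<Union>a\<in>{a. edgeG D x a \<and> is_and a}. {a, kid0 D a, kid1 D a})"

definition new_LB :: "mt_data \<Rightarrow> mt_state \<Rightarrow> node \<Rightarrow> node \<Rightarrow> ereal" where
  "new_LB D st x = (\<lambda>w. if \<exists>a. edgeG D x a \<and> is_and a \<and> (w = kid0 D a \<or> w = kid1 D a)
                         then hh D w else LB st w)"

definition mt_iter :: "mt_data \<Rightarrow> mt_state \<Rightarrow> mt_state \<Rightarrow> bool" where
  "mt_iter D st st' \<longleftrightarrow> LB st (root D) < UB st (root D) \<and>
     (\<exists>x LB2 UB2. descend D st (root D) x
        \<and> propagate D (\<lambda>v b. b < v) (new_G D st x) x (new_LB D st x) LB2
        \<and> propagate D (\<lambda>v b. v < b) (new_G D st x) x (UB st) UB2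
        \<and> st' = \<lparr>Gp = new_G D st x, Ex = Ex st \<union> {x}, LB = LB2, UB = UB2\<rparr>)"

definition mt_init :: "mt_data \<Rightarrow> mt_state" where
  "mt_init D = \<lparr>Gp = {root D}, Ex = {}, LB = (\<lambda>_. 0)(root D := hh D (root D)), UB = (\<lambda>_. \<infinity>)\<rparr>"

text \<open>getSolution; ties among minimizing AND children are broken by a fixed choice
  function ch.\<close>
definition good_choice :: "mt_data \<Rightarrow> mt_state \<Rightarrow> (node \<Rightarrow> node) \<Rightarrow> bool" where
  "good_choice D st ch \<longleftrightarrow> (\<forall>u. andch D (Gp st) u \<noteq> {} \<longrightarrow>
     ch u \<in> andch D (Gp st) u \<and>
     (\<forall>a\<in>andch D (Gp st) u. cost D u (ch u) + andval D (UB st) (ch u) \<le> cost D u a + andval D (UB st) a))"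

inductive getsol :: "mt_data \<Rightarrow> mt_state \<Rightarrow> (node \<Rightarrow> node) \<Rightarrow> node \<Rightarrow> node set \<Rightarrow> bool"
  for D st ch where
  leaf: "andch D (Gp st) u = {} \<or>
     cost D u (termch u) \<le> (INF a\<in>andch D (Gp st) u. cost D u a + andval D (UB st) a) \<Longrightarrow>
     getsol D st ch u {u, termch u}"
| inner: "andch D (Gp st) u \<noteq> {} \<Longrightarrow>
     \<not> cost D u (termch u) \<le> (INF a\<in>andch D (Gp st) u. cost D u a + andval D (UB st) a) \<Longrightarrow>
     getsol D st ch (kid0 D (ch u)) S0 \<Longrightarrow> getsol D st ch (kid1 D (ch u)) S1 \<Longrightarrow>
     getsol D st ch u ({u, ch u} \<union> S0 \<union> S1)"

end

theory Submission
  imports Defs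
begin

text \<open>
  Every reached state satisfies an invariant: besides the structural closure of the explored
  graph G' (every explored AND or terminal node hangs off an expanded OR node), the upper bounds
  satisfy the Bellman equation UB[u] = min (cost(u, t_u), min_a (cost(u, a) + UB[a])) over G'
  at every expanded node and are +\<infinity> elsewhere. Expanding x only adds AND children below x, so
  only the equation at x can break; UB propagation only decreases values and requeues the OR
  parents of every changed node, which restores it.

  Given the invariant, UB[u] is a lower bound on the cost of every solution graph inside G'
  rooted at u: such a solution graph is either u with its terminal child, or u, one AND child a and
  two disjoint solution graphs below the children of a, and induction on depth applies. Conversely
  getSolution follows minimising children, only reaches expanded nodes, and builds a solution
  graph of cost at most UB[r].
\<close>

section \<open>The AND/OR graph\<close>

fun node_samples :: "node \<Rightarrow> nat set" where
  "node_samples (OrN I d) = I"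
| "node_samples (TermN I d) = I"
| "node_samples (AndN I d f) = I"

fun or_parent :: "node \<Rightarrow> node" where
  "or_parent (OrN I d) = OrN I d"
| "or_parent (TermN I d) = OrN I d"
| "or_parent (AndN I d f) = OrN I d"

lemma and_kids:
  assumes "is_and a"
  shows "is_or (kid0 D a)" "is_or (kid1 D a)"
    "depth (kid0 D a) = Suc (depth a)" "depth (kid1 D a) = Suc (depth a)"
    "node_samples (kid0 D a) \<inter> node_samples (kid1 D a) = {}"
  using assms by (cases a; auto simp: restr_def)+

lemma is_and_not_or: "is_and v \<Longrightarrow> \<not> is_or v"
  by (cases v) auto

lemma termch_of_or:
  "is_or u \<Longrightarrow> \<not> is_or (termch u) \<and> \<not> is_and (termch u) \<and> or_parent (termch u) = u"
  by (cases u) auto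

lemma depth_or_parent [simp]: "depth (or_parent v) = depth v"
  by (cases v) auto

lemma is_or_or_parent [simp]: "is_or (or_parent v)"
  by (cases v) auto

lemma cost_and: "is_and a \<Longrightarrow> cost D a v = 0"
  by (cases a) auto

fun wf_node :: "mt_data \<Rightarrow> node \<Rightarrow> bool" where
  "wf_node D (OrN I d) \<longleftrightarrow> I \<noteq> {} \<and> I \<subseteq> {1..nN D} \<and> d \<le> fF D"
| "wf_node D (TermN I d) \<longleftrightarrow> I \<noteq> {} \<and> I \<subseteq> {1..nN D} \<and> d \<le> fF D"
| "wf_node D (AndN I d f) \<longleftrightarrow> I \<noteq> {} \<and> I \<subseteq> {1..nN D} \<and> d < fF D \<and> f \<le> fF D"

lemma finite_wf_nodes: "finite {v. wf_node D v}"
proof -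
  let ?I = "Pow {1..nN D}" and ?d = "{..fF D}"
  have "{v. wf_node D v} \<subseteq> case_prod OrN ` (?I \<times> ?d) \<union> case_prod TermN ` (?I \<times> ?d)
      \<union> (\<lambda>(I, d, f). AndN I d f) ` (?I \<times> ?d \<times> ?d)"
  proof
    fix v assume "v \<in> {v. wf_node D v}"
    then show "v \<in> case_prod OrN ` (?I \<times> ?d) \<union> case_prod TermN ` (?I \<times> ?d)
      \<union> (\<lambda>(I, d, f). AndN I d f) ` (?I \<times> ?d \<times> ?d)"
      by (cases v) (auto simp: image_iff)
  qed
  then show ?thesis by (rule finite_subset) auto
qed

lemma gedge_wf_node: "gedge D u v \<Longrightarrow> wf_node D u \<Longrightarrow> wf_node D v"
  by (induction rule: gedge.induct) (auto simp: restr_def valid_feats_def)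

lemma nodes_wf_node:
  assumes "0 < nN D" and "v \<in> nodes D"
  shows "wf_node D v"
proof -
  have "(gedge D)\<^sup>*\<^sup>* (root D) v" using assms(2) by (simp add: nodes_def)
  then show ?thesis
    by (induction rule: rtranclp_induct) (use assms(1) gedge_wf_node in \<open>auto simp: root_def\<close>)
qed

lemma finite_nodes: "0 < nN D \<Longrightarrow> finite (nodes D)"
  by (rule finite_subset[OF _ finite_wf_nodes]) (auto dest: nodes_wf_node)

lemma depth_le_nodes: "0 < nN D \<Longrightarrow> v \<in> nodes D \<Longrightarrow> depth v \<le> fF D"
  by (drule nodes_wf_node, assumption, cases v) auto

lemma node_samples_nonempty: "0 < nN D \<Longrightarrow> v \<in> nodes D \<Longrightarrow> node_samples v \<noteq> {}"
  by (drule nodes_wf_node, assumption, cases v) auto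

lemma nodes_depth_induct:
  assumes "0 < nN D"
    and step: "\<And>u. (\<And>v. v \<in> nodes D \<Longrightarrow> depth u < depth v \<Longrightarrow> P v) \<Longrightarrow> P u"
  shows "P u"
proof (induction "fF D - depth u" arbitrary: u rule: less_induct)
  case less
  show ?case
  proof (rule step)
    fix v assume "v \<in> nodes D" and "depth u < depth v"
    moreover from this have "depth v \<le> fF D" using depth_le_nodes[OF assms(1)] by blast
    ultimately show "P v" using less by simp
  qed
qed

lemma edgeG_gedge: "edgeG D u v \<Longrightarrow> gedge D u v"
  by (simp add: edgeG_def)

lemma edgeG_source_nodes: "edgeG D u v \<Longrightarrow> u \<in> nodes D"
  by (simp add: edgeG_def)

lemma edgeG_target_nodes: "edgeG D u v \<Longrightarrow> v \<in> nodes D"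
  by (auto simp: edgeG_def nodes_def intro: rtranclp.rtrancl_into_rtrancl)

lemma gedge_mono: "gedge D u v \<Longrightarrow> depth u \<le> depth v \<and> node_samples v \<subseteq> node_samples u"
  by (cases rule: gedge.cases) (auto simp: restr_def)

lemma gedge_into_or: "gedge D u v \<Longrightarrow> is_or v \<Longrightarrow> is_and u"
  by (cases rule: gedge.cases) auto

lemma gedge_into_non_or: "gedge D u v \<Longrightarrow> \<not> is_or v \<Longrightarrow> u = or_parent v"
  by (cases rule: gedge.cases) auto

lemma gedge_from_or: "gedge D u v \<Longrightarrow> is_or u \<Longrightarrow> v = termch u \<or> is_and v"
  by (cases rule: gedge.cases) auto

lemma gedge_from_or_not_or: "gedge D u v \<Longrightarrow> is_or u \<Longrightarrow> \<not> is_or v"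
  by (cases rule: gedge.cases) auto

lemma gedge_from_and: "gedge D a v \<Longrightarrow> is_and a \<Longrightarrow> v = kid0 D a \<or> v = kid1 D a"
  by (cases rule: gedge.cases) auto

lemma no_gedge_from_termch: "is_or u \<Longrightarrow> \<not> gedge D (termch u) v"
  by (cases u) (auto elim: gedge.cases)

lemma edgeG_termch: "0 < nN D \<Longrightarrow> u \<in> nodes D \<Longrightarrow> is_or u \<Longrightarrow> edgeG D u (termch u)"
  using nodes_wf_node[of D u] by (cases u) (auto simp: edgeG_def intro: gedge.intros)

lemma edgeG_and_kids:
  assumes "edgeG D u a" and "is_and a"
  shows "edgeG D a (kid0 D a)" and "edgeG D a (kid1 D a)"
proof -
  have "a \<in> nodes D" "gedge D u a" using assms(1) by (auto simp: edgeG_def edgeG_target_nodes)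
  then show "edgeG D a (kid0 D a)" "edgeG D a (kid1 D a)"
    using assms(2) by (auto simp: edgeG_def elim!: gedge.cases intro: gedge.intros)
qed

section \<open>Solution graphs\<close>

abbreviation edge_in :: "mt_data \<Rightarrow> node set \<Rightarrow> node \<Rightarrow> node \<Rightarrow> bool" where
  "edge_in D T \<equiv> \<lambda>x y. edgeG D x y \<and> x \<in> T \<and> y \<in> T"

definition solution_at :: "mt_data \<Rightarrow> node \<Rightarrow> node set \<Rightarrow> bool" where
  "solution_at D u T \<longleftrightarrow> u \<in> T \<and> T \<subseteq> nodes D
     \<and> (\<forall>v\<in>T. (edge_in D T)\<^sup>*\<^sup>* u v)
     \<and> (\<forall>a\<in>T. is_and a \<longrightarrow> (\<forall>v. edgeG D a v \<longrightarrow> v \<in> T))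
     \<and> (\<forall>w\<in>T. is_or w \<longrightarrow> (\<exists>!v. edgeG D w v \<and> v \<in> T))"

lemma sol_graph_iff_solution_at: "sol_graph D S \<longleftrightarrow> solution_at D (root D) S"
  by (simp add: sol_graph_def solution_at_def)

lemma
  assumes "solution_at D u T"
  shows solution_at_root: "u \<in> T"
    and solution_at_nodes: "T \<subseteq> nodes D"
    and solution_at_reach: "v \<in> T \<Longrightarrow> (edge_in D T)\<^sup>*\<^sup>* u v"
    and solution_at_and: "a \<in> T \<Longrightarrow> is_and a \<Longrightarrow> edgeG D a v \<Longrightarrow> v \<in> T"
    and solution_at_or: "w \<in> T \<Longrightarrow> is_or w \<Longrightarrow> \<exists>!v. edgeG D w v \<and> v \<in> T"
  using assms unfolding solution_at_def by blast+

lemma solution_at_below: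
  assumes "solution_at D u T" and "v \<in> T"
  shows "depth u \<le> depth v \<and> node_samples v \<subseteq> node_samples u"
  using solution_at_reach[OF assms]
  by (induction rule: rtranclp_induct) (auto dest!: edgeG_gedge gedge_mono)

lemma solution_at_or_parent:
  assumes sol: "solution_at D u T" and "is_or u" and "y \<in> T" and "\<not> is_or y"
  shows "or_parent y \<in> T"
proof -
  have "(edge_in D T)\<^sup>*\<^sup>* u y" and "u \<noteq> y" using assms solution_at_reach[OF sol] by auto
  then obtain c where "edge_in D T c y" by (auto elim: rtranclp.cases)
  then show ?thesis using gedge_into_non_or assms(4) by (auto dest: edgeG_gedge)
qed

lemma solution_at_reachable_part:
  assumes sol: "solution_at D u T" and "k \<in> T"
  shows "solution_at D k {v \<in> T. (edge_in D T)\<^sup>*\<^sup>* k v}"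
proof -
  define T' where "T' = {v \<in> T. (edge_in D T)\<^sup>*\<^sup>* k v}"
  have closed: "y \<in> T'" if "x \<in> T'" and "edgeG D x y" and "y \<in> T" for x y
  proof -
    have "(edge_in D T)\<^sup>*\<^sup>* k x" "x \<in> T" using that(1) by (simp_all add: T'_def)
    then have "(edge_in D T)\<^sup>*\<^sup>* k y" using that(2,3) by (simp add: rtranclp.rtrancl_into_rtrancl)
    then show ?thesis using that(3) by (simp add: T'_def)
  qed
  have reach: "(edge_in D T')\<^sup>*\<^sup>* k v" if "v \<in> T'" for v
  proof -
    have "(edge_in D T)\<^sup>*\<^sup>* k v" using that by (simp add: T'_def)
    then show ?thesis
    proof (induction rule: rtranclp_induct)
      case (step y z)
      have "y \<in> T'" using step.hyps by (simp add: T'_def)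
      then have "edge_in D T' y z" using step.hyps(2) closed by blast
      with step.IH show ?case by (rule rtranclp.rtrancl_into_rtrancl)
    qed simp
  qed
  have unique: "\<exists>!v. edgeG D w v \<and> v \<in> T'" if w: "w \<in> T'" "is_or w" for w
  proof -
    have "w \<in> T" using w(1) by (simp add: T'_def)
    then obtain v where "edgeG D w v" "v \<in> T" "\<And>v'. edgeG D w v' \<Longrightarrow> v' \<in> T \<Longrightarrow> v' = v"
      using solution_at_or[OF sol _ w(2)] by blast
    with closed[OF w(1)] show ?thesis by (auto simp: T'_def)
  qed
  have "k \<in> T'" "T' \<subseteq> nodes D" using \<open>k \<in> T\<close> solution_at_nodes[OF sol] by (auto simp: T'_def)
  moreover have "v \<in> T'" if "a \<in> T'" "is_and a" "edgeG D a v" for a v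
    using that closed solution_at_and[OF sol] by (auto simp: T'_def)
  ultimately have "solution_at D k T'"
    unfolding solution_at_def using reach unique by blast
  then show ?thesis by (simp add: T'_def)
qed

lemma solution_at_no_crossing:
  assumes S: "solution_at D k S" and S': "solution_at D k' S'" "is_or k'"
    and disj: "S \<inter> S' = {}" and "x \<in> S" and "edgeG D x y" and "y \<in> S'"
  shows False
proof (cases "is_or y")
  case True
  then have "is_and x" using \<open>edgeG D x y\<close> by (auto dest: edgeG_gedge gedge_into_or)
  then have "y \<in> S" using solution_at_and[OF S \<open>x \<in> S\<close>] \<open>edgeG D x y\<close> by blast
  then show False using disj \<open>y \<in> S'\<close> by blast
next
  case False
  then have "x = or_parent y" using \<open>edgeG D x y\<close> by (auto dest: edgeG_gedge gedge_into_non_or)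
  moreover have "or_parent y \<in> S'" using solution_at_or_parent[OF S' \<open>y \<in> S'\<close> False] .
  ultimately show False using disj \<open>x \<in> S\<close> by blast
qed

lemma sol_cost_by_source:
  assumes "finite T"
  shows "sol_cost D T = (\<Sum>x\<in>T. \<Sum>y\<in>{y \<in> T. edgeG D x y}. cost D x y)"
proof -
  have "{(u, v). u \<in> T \<and> v \<in> T \<and> edgeG D u v} = Sigma T (\<lambda>x. {y \<in> T. edgeG D x y})" by auto
  then show ?thesis using assms by (simp add: sol_cost_def sum.Sigma)
qed

lemma solution_at_leaf:
  assumes n: "0 < nN D" and u: "u \<in> nodes D" "is_or u"
  shows "solution_at D u {u, termch u}" and "sol_cost D {u, termch u} = cost D u (termch u)"
proof -
  let ?t = "termch u"
  have ut: "edgeG D u ?t" using edgeG_termch[OF n u] .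
  have no_t: "\<not> edgeG D ?t y" for y using no_gedge_from_termch[OF u(2)] by (auto dest: edgeG_gedge)
  have no_u: "\<not> edgeG D u u" using u(2) by (auto dest: edgeG_gedge gedge_from_or_not_or)
  show "solution_at D u {u, ?t}"
    unfolding solution_at_def using ut no_t no_u u edgeG_target_nodes[OF ut] termch_of_or[OF u(2)]
    by (auto simp: is_and_not_or)
  have "{(x, y). x \<in> {u, ?t} \<and> y \<in> {u, ?t} \<and> edgeG D x y} = {(u, ?t)}"
    using ut no_t no_u by auto
  then show "sol_cost D {u, ?t} = cost D u ?t" unfolding sol_cost_def by simp
qed

context
  fixes D u a S0 S1
  assumes n: "0 < nN D" and ua: "edgeG D u a" and a: "is_and a"
    and S0: "solution_at D (kid0 D a) S0" and S1: "solution_at D (kid1 D a) S1"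
begin

lemma and_split_root: "u = or_parent a" "is_or u"
proof -
  show "u = or_parent a" using ua is_and_not_or[OF a] by (auto dest: edgeG_gedge gedge_into_non_or)
  then show "is_or u" by simp
qed

lemma and_split_deeper: "v \<in> S0 \<union> S1 \<Longrightarrow> depth u < depth v"
  using solution_at_below[OF S0] solution_at_below[OF S1] and_kids(3,4)[OF a, of D] and_split_root
  by fastforce

lemma and_split_disjoint: "S0 \<inter> S1 = {}"
proof -
  have "node_samples v = {}" if "v \<in> S0" "v \<in> S1" for v
    using solution_at_below[OF S0 that(1)] solution_at_below[OF S1 that(2)] and_kids(5)[OF a]
    by blast
  then show ?thesis using node_samples_nonempty[OF n] solution_at_nodes[OF S0] by blast
qed

lemma and_split_successors_part:
  assumes "(S, S') \<in> {(S0, S1), (S1, S0)}" and "x \<in> S"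
  shows "{y \<in> {u, a} \<union> S0 \<union> S1. edgeG D x y} = {y \<in> S. edgeG D x y}"
proof -
  have "y \<notin> S'" if "edgeG D x y" for y
    using solution_at_no_crossing[of D _ S _ S'] S0 S1 and_kids(1,2)[OF a] and_split_disjoint
      assms that by blast
  moreover have "y \<noteq> u \<and> y \<noteq> a" if "edgeG D x y" for y
    using and_split_deeper[of x] assms gedge_mono[OF edgeG_gedge[OF that]] and_split_root by auto
  ultimately show ?thesis using assms by auto
qed

lemma and_split_successors_root: "{y \<in> {u, a} \<union> S0 \<union> S1. edgeG D u y} = {a}"
proof -
  have "\<not> is_or y" if "edgeG D u y" for y
    using that and_split_root(2) by (auto dest: edgeG_gedge gedge_from_or_not_or)
  moreover have "y \<notin> S0 \<union> S1" if "edgeG D u y" "\<not> is_or y" for y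
  proof
    assume "y \<in> S0 \<union> S1"
    then have "or_parent y \<in> S0 \<union> S1"
      using solution_at_or_parent[OF S0] solution_at_or_parent[OF S1] and_kids(1,2)[OF a] that(2)
      by blast
    moreover have "or_parent y = u" using that by (auto dest: edgeG_gedge gedge_into_non_or)
    ultimately show False using and_split_deeper by blast
  qed
  ultimately show ?thesis using ua and_split_root(2) by fastforce
qed

lemma and_split_successors_and: "{y \<in> {u, a} \<union> S0 \<union> S1. edgeG D a y} = {kid0 D a, kid1 D a}"
  using edgeG_and_kids[OF ua a] solution_at_root[OF S0] solution_at_root[OF S1] a
  by (auto dest: edgeG_gedge gedge_from_and)

lemma and_split_reach:
  assumes "v \<in> {u, a} \<union> S0 \<union> S1"
  shows "(edge_in D ({u, a} \<union> S0 \<union> S1))\<^sup>*\<^sup>* u v"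
proof -
  let ?T = "{u, a} \<union> S0 \<union> S1"
  have via_kid: "(edge_in D ?T)\<^sup>*\<^sup>* u v"
    if "solution_at D k S" "S \<subseteq> ?T" "edgeG D a k" "v \<in> S" for k S
  proof -
    have "(edge_in D S)\<^sup>*\<^sup>* k v" using solution_at_reach[OF that(1,4)] .
    then have "(edge_in D ?T)\<^sup>*\<^sup>* k v"
      by (rule mono_rtranclp[rule_format, rotated]) (use that(2) in blast)
    moreover have "edge_in D ?T u a" and "edge_in D ?T a k"
      using ua that(3) solution_at_root[OF that(1)] that(2) by auto
    ultimately show ?thesis by (blast intro: converse_rtranclp_into_rtranclp)
  qed
  consider "v = u" | "v = a" | "v \<in> S0" | "v \<in> S1" using assms by blast
  then show ?thesis
  proof cases
    case 2
    then show ?thesis using ua by auto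
  next
    case 3
    then show ?thesis using via_kid[OF S0 _ edgeG_and_kids(1)[OF ua a]] by blast
  next
    case 4
    then show ?thesis using via_kid[OF S1 _ edgeG_and_kids(2)[OF ua a]] by blast
  qed simp
qed

lemma solution_at_split: "solution_at D u ({u, a} \<union> S0 \<union> S1)"
  unfolding solution_at_def
proof (intro conjI ballI impI allI)
  show "u \<in> {u, a} \<union> S0 \<union> S1" by simp
  show "{u, a} \<union> S0 \<union> S1 \<subseteq> nodes D"
    using solution_at_nodes[OF S0] solution_at_nodes[OF S1] edgeG_source_nodes[OF ua]
      edgeG_target_nodes[OF ua] by auto
next
  fix v assume "v \<in> {u, a} \<union> S0 \<union> S1"
  then show "(edge_in D ({u, a} \<union> S0 \<union> S1))\<^sup>*\<^sup>* u v" by (rule and_split_reach)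
next
  fix b v assume b: "b \<in> {u, a} \<union> S0 \<union> S1" "is_and b" "edgeG D b v"
  then consider "b = a" | "b \<in> S0" | "b \<in> S1" using and_split_root(2) is_and_not_or by blast
  then show "v \<in> {u, a} \<union> S0 \<union> S1"
  proof cases
    case 1
    then show ?thesis using b(3) a solution_at_root[OF S0] solution_at_root[OF S1]
      by (auto dest: edgeG_gedge gedge_from_and)
  qed (use b solution_at_and[OF S0] solution_at_and[OF S1] in blast)+
next
  fix w assume w: "w \<in> {u, a} \<union> S0 \<union> S1" "is_or w"
  then consider "w = u" | "w \<in> S0" | "w \<in> S1" using a is_and_not_or by blast
  then show "\<exists>!v. edgeG D w v \<and> v \<in> {u, a} \<union> S0 \<union> S1"
  proof cases
    case 1
    then show ?thesis
      using and_split_successors_root unfolding set_eq_iff mem_Collect_eq singleton_iff by metis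
  next
    case 2
    then have "{y \<in> {u, a} \<union> S0 \<union> S1. edgeG D w y} = {y \<in> S0. edgeG D w y}"
      using and_split_successors_part[of S0 S1 w] by simp
    then show ?thesis
      using solution_at_or[OF S0 2 w(2)] unfolding set_eq_iff mem_Collect_eq by metis
  next
    case 3
    then have "{y \<in> {u, a} \<union> S0 \<union> S1. edgeG D w y} = {y \<in> S1. edgeG D w y}"
      using and_split_successors_part[of S1 S0 w] by simp
    then show ?thesis
      using solution_at_or[OF S1 3 w(2)] unfolding set_eq_iff mem_Collect_eq by metis
  qed
qed

lemma sol_cost_split: "sol_cost D ({u, a} \<union> S0 \<union> S1) = cost D u a + sol_cost D S0 + sol_cost D S1"
proof -
  let ?T = "{u, a} \<union> S0 \<union> S1"
  let ?out = "\<lambda>T x. \<Sum>y\<in>{y \<in> T. edgeG D x y}. cost D x y"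
  have fin: "finite S0" "finite S1"
    using finite_nodes[OF n] solution_at_nodes[OF S0] solution_at_nodes[OF S1] finite_subset
    by blast+
  have "u \<notin> S0 \<union> S1" "a \<notin> S0 \<union> S1" "u \<noteq> a"
    using and_split_deeper and_split_root a is_and_not_or by fastforce+
  then have "sol_cost D ?T = ?out ?T u + ?out ?T a + sum (?out ?T) S0 + sum (?out ?T) S1"
    using fin and_split_disjoint by (simp add: sol_cost_by_source sum.union_disjoint add.assoc)
  moreover have "sum (?out ?T) S0 = sum (?out S0) S0" "sum (?out ?T) S1 = sum (?out S1) S1"
    using and_split_successors_part[of S0 S1] and_split_successors_part[of S1 S0]
    by (auto intro: sum.cong)
  ultimately show ?thesis
    using and_split_successors_root and_split_successors_and fin
    by (simp add: sol_cost_by_source cost_and[OF a])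
qed

end

lemma solution_at_cases:
  assumes sol: "solution_at D u T" and u: "is_or u"
  obtains "T = {u, termch u}"
  | a T0 T1 where "edgeG D u a" "is_and a" "solution_at D (kid0 D a) T0"
      "solution_at D (kid1 D a) T1" "T = {u, a} \<union> T0 \<union> T1"
proof -
  obtain c where uc: "edgeG D u c" "c \<in> T" and c_unique: "\<And>y. edgeG D u y \<Longrightarrow> y \<in> T \<Longrightarrow> y = c"
    using solution_at_or[OF sol solution_at_root[OF sol] u] by blast
  have via_c: "v = u \<or> (edge_in D T)\<^sup>*\<^sup>* c v" if "v \<in> T" for v
    using solution_at_reach[OF sol that] by (cases rule: converse_rtranclpE) (auto dest: c_unique)
  have "c = termch u \<or> is_and c" using gedge_from_or[OF edgeG_gedge[OF uc(1)] u] .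
  then show thesis
  proof
    assume c: "c = termch u"
    have "(edge_in D T)\<^sup>*\<^sup>* c v \<Longrightarrow> v = c" for v
      using no_gedge_from_termch[OF u] c by (auto elim: converse_rtranclpE dest: edgeG_gedge)
    then have "T = {u, c}" using via_c uc(2) solution_at_root[OF sol] by blast
    then show thesis using c that(1) by simp
  next
    assume c: "is_and c"
    define T0 T1 where "T0 = {v \<in> T. (edge_in D T)\<^sup>*\<^sup>* (kid0 D c) v}"
      and "T1 = {v \<in> T. (edge_in D T)\<^sup>*\<^sup>* (kid1 D c) v}"
    have kids_T: "kid0 D c \<in> T" "kid1 D c \<in> T"
      using solution_at_and[OF sol uc(2) c] edgeG_and_kids[OF uc(1) c] by auto
    have "(edge_in D T)\<^sup>*\<^sup>* c v \<Longrightarrow> v \<in> T \<Longrightarrow> v \<in> {c} \<union> T0 \<union> T1" for v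
      using c
      by (auto elim: converse_rtranclpE dest: edgeG_gedge gedge_from_and simp: T0_def T1_def)
    then have "T = {u, c} \<union> T0 \<union> T1"
      using via_c uc(2) solution_at_root[OF sol] by (auto simp: T0_def T1_def)
    then show thesis
      using that(2)[OF uc(1) c] solution_at_reachable_part[OF sol kids_T(1)]
        solution_at_reachable_part[OF sol kids_T(2)] by (simp add: T0_def T1_def)
  qed
qed

section \<open>The invariant of the main loop\<close>

lemma val_le_cost_termch: "val D G B u \<le> cost D u (termch u)"
  by (simp add: val_def)

lemma val_le_cost_andch: "a \<in> andch D G u \<Longrightarrow> val D G B u \<le> cost D u a + andval D B a"
  unfolding val_def by (meson INF_lower min.coboundedI1)

lemma val_mono: "(\<And>z. B' z \<le> B z) \<Longrightarrow> val D G B' w \<le> val D G B w"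
  unfolding val_def andval_def by (intro min.mono INF_mono' add_mono order.refl) auto

lemma val_fun_upd_other:
  assumes "\<And>b. b \<in> andch D G w \<Longrightarrow> kid0 D b \<noteq> u \<and> kid1 D b \<noteq> u"
  shows "val D G (B(u := y)) w = val D G B w"
  unfolding val_def andval_def using assms by (intro arg_cong2[where f = min] INF_cong) auto

lemma andch_kids_ne: "b \<in> andch D G w \<Longrightarrow> kid0 D b \<noteq> w \<and> kid1 D b \<noteq> w"
  using and_kids[of b D]
  by (auto simp: andch_def dest!: edgeG_gedge gedge_into_non_or[OF _ is_and_not_or])

definition explored :: "mt_data \<Rightarrow> node set \<Rightarrow> node set \<Rightarrow> bool" where
  "explored D G E \<longleftrightarrow> G \<subseteq> nodes D \<and> root D \<in> G \<and> E \<subseteq> G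
     \<and> (\<forall>u\<in>E. is_or u \<and> termch u \<in> G)
     \<and> (\<forall>a\<in>G. is_and a \<longrightarrow> kid0 D a \<in> G \<and> kid1 D a \<in> G)
     \<and> (\<forall>c\<in>G. \<not> is_or c \<longrightarrow> or_parent c \<in> E)"

lemma
  assumes "explored D G E"
  shows explored_nodes: "G \<subseteq> nodes D"
    and explored_root: "root D \<in> G"
    and explored_expanded: "E \<subseteq> G"
    and explored_expanded_or: "u \<in> E \<Longrightarrow> is_or u"
    and explored_termch: "u \<in> E \<Longrightarrow> termch u \<in> G"
    and explored_kids: "a \<in> G \<Longrightarrow> is_and a \<Longrightarrow> kid0 D a \<in> G \<and> kid1 D a \<in> G"
    and explored_or_parent: "c \<in> G \<Longrightarrow> \<not> is_or c \<Longrightarrow> or_parent c \<in> E"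
  using assms unfolding explored_def by blast+

lemma explored_parents:
  assumes "explored D G E"
  shows "parents D G u \<subseteq> E"
proof
  fix p assume "p \<in> parents D G u"
  then obtain a where "a \<in> G" "is_and a" "edgeG D p a" unfolding parents_def by blast
  then show "p \<in> E"
    using explored_or_parent[OF assms] gedge_into_non_or is_and_not_or by (metis edgeG_gedge)
qed

lemma explored_solution_root:
  assumes "explored D G E" and sol: "solution_at D u T" and "T \<subseteq> G" and "is_or u"
  shows "u \<in> E"
proof -
  obtain c where "edgeG D u c" "c \<in> T"
    using solution_at_or[OF sol solution_at_root[OF sol] \<open>is_or u\<close>] by blast
  moreover from this have "\<not> is_or c"
    using \<open>is_or u\<close> by (auto dest: edgeG_gedge gedge_from_or_not_or)
  ultimately show ?thesis
    using assms(1,3) explored_or_parent by (metis edgeG_gedge gedge_into_non_or subsetD)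
qed

text \<open>Q is the propagation queue: the nodes whose Bellman equation may still be violated.\<close>

definition ub_consistent ::
    "mt_data \<Rightarrow> node set \<Rightarrow> node set \<Rightarrow> node set \<Rightarrow> (node \<Rightarrow> ereal) \<Rightarrow> bool" where
  "ub_consistent D G E Q B \<longleftrightarrow> Q \<subseteq> E \<and> (\<forall>w. w \<notin> E \<longrightarrow> B w = \<infinity>)
     \<and> (\<forall>w\<in>E. val D G B w \<le> B w) \<and> (\<forall>w\<in>E - Q. B w = val D G B w)"

lemma val_fun_upd_nonparent:
  assumes "w \<in> G" and "is_or w" and "w \<notin> parents D G u"
  shows "val D G (B(u := y)) w = val D G B w"
proof (rule val_fun_upd_other)
  fix b assume "b \<in> andch D G w"
  then show "kid0 D b \<noteq> u \<and> kid1 D b \<noteq> u"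
    using assms edgeG_and_kids[of D w b] unfolding andch_def parents_def by blast
qed

lemma ub_consistent_update:
  assumes cons: "ub_consistent D G E Q B" and "u \<in> Q" and decrease: "val D G B u < B u"
    and E: "E \<subseteq> G" "\<forall>w\<in>E. is_or w" and par: "parents D G u \<subseteq> E"
  shows "ub_consistent D G E (Q - {u} \<union> parents D G u) (B(u := val D G B u))"
  unfolding ub_consistent_def
proof (intro conjI allI ballI impI)
  let ?B' = "B(u := val D G B u)"
  have u: "u \<in> E" using \<open>u \<in> Q\<close> cons by (auto simp: ub_consistent_def)
  have val_u: "val D G ?B' u = ?B' u"
    using val_fun_upd_other[OF andch_kids_ne] by simp
  show "Q - {u} \<union> parents D G u \<subseteq> E" using cons par by (auto simp: ub_consistent_def)
  show "?B' w = \<infinity>" if "w \<notin> E" for w using that cons u by (auto simp: ub_consistent_def)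
  show "val D G ?B' w \<le> ?B' w" if "w \<in> E" for w
  proof (cases "w = u")
    case False
    have "val D G ?B' w \<le> val D G B w" using decrease by (intro val_mono) auto
    then show ?thesis using cons that False by (auto simp: ub_consistent_def intro: order.trans)
  qed (use val_u in simp)
  show "?B' w = val D G ?B' w" if w: "w \<in> E - (Q - {u} \<union> parents D G u)" for w
  proof (cases "w = u")
    case False
    then have "val D G ?B' w = val D G B w" using w E by (intro val_fun_upd_nonparent) auto
    then show ?thesis using cons w False by (auto simp: ub_consistent_def)
  qed (use val_u in simp)
qed

lemma prop_step_ub_consistent:
  assumes step: "prop_step D (\<lambda>v b. v < b) G (Q, B) (Q', B')"
    and cons: "ub_consistent D G E Q B"
    and E: "E \<subseteq> G" "\<forall>w\<in>E. is_or w" and par: "\<And>u. parents D G u \<subseteq> E"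
  shows "ub_consistent D G E Q' B'"
  using step
proof cases
  case (upd u)
  then show ?thesis using ub_consistent_update[OF cons upd(3) _ E par] by simp
next
  case (noupd u)
  then have "B u = val D G B u" using cons by (auto simp: ub_consistent_def intro!: antisym)
  then show ?thesis using cons noupd by (auto simp: ub_consistent_def)
qed

lemma propagate_ub_consistent:
  assumes "propagate D (\<lambda>v b. v < b) G x B B'" and "ub_consistent D G E {x} B"
    and "E \<subseteq> G" "\<forall>w\<in>E. is_or w" "\<And>u. parents D G u \<subseteq> E"
  shows "ub_consistent D G E {} B'"
proof -
  have "ub_consistent D G E (fst s') (snd s')"
    if "(prop_step D (\<lambda>v b. v < b) G)\<^sup>*\<^sup>* s s'" "ub_consistent D G E (fst s) (snd s)" for s s'
    using that
  proof (induction rule: rtranclp_induct)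
    case (step s' s'')
    then show ?case
      using prop_step_ub_consistent[of D G "fst s'" "snd s'" "fst s''" "snd s''"] assms(3-5) by simp
  qed
  then show ?thesis using assms(1,2) unfolding propagate_def by fastforce
qed

definition mt_invariant :: "mt_data \<Rightarrow> mt_state \<Rightarrow> bool" where
  "mt_invariant D st \<longleftrightarrow> explored D (Gp st) (Ex st) \<and> ub_consistent D (Gp st) (Ex st) {} (UB st)"

lemma mt_invariant_init: "mt_invariant D (mt_init D)"
  by (simp add: mt_invariant_def explored_def ub_consistent_def mt_init_def nodes_def root_def)

lemma descend_unexpanded:
  assumes "descend D st u x" and "explored D (Gp st) (Ex st)" and "u \<in> Gp st" and "is_or u"
  shows "x \<in> Gp st \<and> is_or x \<and> x \<notin> Ex st"
  using assms
proof (induction rule: descend.induct)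
  case (go u a x)
  then have "a \<in> Gp st" "is_and a" by (auto simp: andch_def)
  then have "kid0 D a \<in> Gp st \<and> is_or (kid0 D a)" "kid1 D a \<in> Gp st \<and> is_or (kid1 D a)"
    using explored_kids[OF go.prems(1)] and_kids by auto
  then show ?case using go.IH[OF go.prems(1)] by (simp split: if_splits)
qed simp

lemma descend_from_unexpanded: "descend D st u x \<Longrightarrow> u \<notin> Ex st \<Longrightarrow> x = u"
  by (cases rule: descend.cases) auto

lemma new_G_cases:
  assumes "v \<in> new_G D st x"
  obtains "v \<in> Gp st" | "v = termch x" | "edgeG D x v" "is_and v"
    | a where "edgeG D x a" "is_and a" "v = kid0 D a \<or> v = kid1 D a"
  using assms unfolding new_G_def by blast

lemma val_new_G:
  assumes "is_or x" and "w \<noteq> x"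
  shows "val D (new_G D st x) B w = val D (Gp st) B w"
proof -
  have "b \<in> Gp st" if "b \<in> new_G D st x" "is_and b" "edgeG D w b" for b
    using that(1)
  proof (cases rule: new_G_cases)
    case 2
    then show ?thesis using that(2) termch_of_or[OF assms(1)] by simp
  next
    case 3
    then show ?thesis
      using that(2,3) assms(2) by (metis edgeG_gedge gedge_into_non_or is_and_not_or)
  next
    case (4 a)
    then show ?thesis using that(2) and_kids[OF 4(2)] is_and_not_or by metis
  qed
  then have "andch D (new_G D st x) w = andch D (Gp st) w"
    unfolding andch_def new_G_def by blast
  then show ?thesis by (simp add: val_def)
qed

lemma new_G_kids:
  assumes ex: "explored D (Gp st) (Ex st)" and "is_or x"
    and "b \<in> new_G D st x" and "is_and b"
  shows "kid0 D b \<in> new_G D st x \<and> kid1 D b \<in> new_G D st x"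
  using \<open>b \<in> new_G D st x\<close>
proof (cases rule: new_G_cases)
  case 1
  then show ?thesis using explored_kids[OF ex _ \<open>is_and b\<close>] by (auto simp: new_G_def)
next
  case 2
  then show ?thesis using \<open>is_and b\<close> termch_of_or[OF \<open>is_or x\<close>] by simp
next
  case 3
  then show ?thesis by (auto simp: new_G_def)
next
  case (4 a)
  then show ?thesis using \<open>is_and b\<close> and_kids[OF 4(2)] is_and_not_or by metis
qed

lemma new_G_or_parent:
  assumes ex: "explored D (Gp st) (Ex st)" and "is_or x"
    and "c \<in> new_G D st x" and "\<not> is_or c"
  shows "or_parent c \<in> insert x (Ex st)"
  using \<open>c \<in> new_G D st x\<close>
proof (cases rule: new_G_cases)
  case 1
  then show ?thesis using explored_or_parent[OF ex _ \<open>\<not> is_or c\<close>] by blast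
next
  case 2
  then show ?thesis using termch_of_or[OF \<open>is_or x\<close>] by simp
next
  case 3
  then show ?thesis using \<open>\<not> is_or c\<close> by (metis edgeG_gedge gedge_into_non_or insertI1)
next
  case (4 a)
  then show ?thesis using \<open>\<not> is_or c\<close> and_kids[OF 4(2)] by metis
qed

lemma explored_expand:
  assumes n: "0 < nN D" and ex: "explored D (Gp st) (Ex st)" and x: "x \<in> Gp st" "is_or x"
  shows "explored D (new_G D st x) (insert x (Ex st))"
proof -
  let ?G = "new_G D st x"
  have old: "Gp st \<subseteq> ?G" and xt_G: "termch x \<in> ?G" by (auto simp: new_G_def)
  have xt: "edgeG D x (termch x)"
    using edgeG_termch[OF n _ x(2)] x(1) explored_nodes[OF ex] by blast
  have "v \<in> nodes D" if "v \<in> ?G" for v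
    using that
    by (cases rule: new_G_cases)
      (use explored_nodes[OF ex] xt edgeG_target_nodes edgeG_and_kids in blast)+
  then show ?thesis
    unfolding explored_def
    using old xt_G x explored_root[OF ex] explored_expanded[OF ex] explored_expanded_or[OF ex]
      explored_termch[OF ex] new_G_kids[OF ex x(2)] new_G_or_parent[OF ex x(2)]
    by blast
qed

lemma mt_iter_invariant:
  assumes n: "0 < nN D" and inv: "mt_invariant D st" and iter: "mt_iter D st st'"
  shows "mt_invariant D st' \<and> root D \<in> Ex st'"
proof -
  obtain x UB' where x: "descend D st (root D) x"
    and propagation: "propagate D (\<lambda>v b. v < b) (new_G D st x) x (UB st) UB'"
    and st': "Gp st' = new_G D st x" "Ex st' = insert x (Ex st)" "UB st' = UB'"
    using iter unfolding mt_iter_def by auto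
  have ex: "explored D (Gp st) (Ex st)" and ub: "ub_consistent D (Gp st) (Ex st) {} (UB st)"
    using inv by (simp_all add: mt_invariant_def)
  have x_new: "x \<in> Gp st" "is_or x" "x \<notin> Ex st"
    using descend_unexpanded[OF x ex explored_root[OF ex]] by (auto simp: root_def)
  have ex': "explored D (new_G D st x) (insert x (Ex st))"
    using explored_expand[OF n ex x_new(1,2)] .
  have "val D (new_G D st x) (UB st) w = val D (Gp st) (UB st) w" if "w \<in> Ex st" for w
    using val_new_G[OF x_new(2)] that x_new(3) by metis
  then have "ub_consistent D (new_G D st x) (insert x (Ex st)) {x} (UB st)"
    using ub x_new(3) by (auto simp: ub_consistent_def)
  then have "ub_consistent D (new_G D st x) (insert x (Ex st)) {} UB'"
    using propagate_ub_consistent[OF propagation] explored_expanded[OF ex']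
      explored_expanded_or[OF ex'] explored_parents[OF ex'] by blast
  moreover have "root D \<in> Ex st'"
    using descend_from_unexpanded[OF x] st'(2) by blast
  ultimately show ?thesis using ex' st' by (simp add: mt_invariant_def)
qed

lemma reached_invariant:
  assumes n: "0 < nN D" and "(mt_iter D)\<^sup>+\<^sup>+ (mt_init D) st"
  shows "mt_invariant D st \<and> root D \<in> Ex st"
  using assms(2)
  by (induction rule: tranclp_induct) (use mt_iter_invariant[OF n] mt_invariant_init in blast)+

section \<open>Optimality of getSolution\<close>

context
  fixes D st
  assumes n: "0 < nN D" and inv: "mt_invariant D st"
begin

lemma
  shows explored_state: "explored D (Gp st) (Ex st)"
    and UB_bellman: "u \<in> Ex st \<Longrightarrow> UB st u = val D (Gp st) (UB st) u"
    and UB_unexpanded: "u \<notin> Ex st \<Longrightarrow> UB st u = \<infinity>"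
  using inv by (auto simp: mt_invariant_def ub_consistent_def)

lemma UB_le_sol_cost: "solution_at D u T \<Longrightarrow> T \<subseteq> Gp st \<Longrightarrow> is_or u \<Longrightarrow> UB st u \<le> sol_cost D T"
proof (induction u arbitrary: T rule: nodes_depth_induct[OF n])
  case (1 u)
  have u: "u \<in> nodes D" "u \<in> Ex st"
    using solution_at_nodes[OF "1.prems"(1)] solution_at_root[OF "1.prems"(1)]
      explored_solution_root[OF explored_state "1.prems"] by auto
  from "1.prems"(1,3) show ?case
  proof (cases rule: solution_at_cases)
    case 1
    then show ?thesis
      using UB_bellman[OF u(2)] val_le_cost_termch solution_at_leaf(2)[OF n u(1) "1.prems"(3)]
      by simp
  next
    case (2 a T0 T1)
    have "a \<in> andch D (Gp st) u" using 2(1,2,5) "1.prems"(2) by (simp add: andch_def)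
    have kid_bound: "UB st (kid D a) \<le> sol_cost D T'"
      if "kid = kid0 \<or> kid = kid1" "solution_at D (kid D a) T'" "T' \<subseteq> T" for kid T'
    proof (rule "1.IH")
      have "edgeG D a (kid D a)" using edgeG_and_kids[OF 2(1,2)] that(1) by auto
      then show "kid D a \<in> nodes D" by (rule edgeG_target_nodes)
      show "depth u < depth (kid D a)"
        using and_kids[OF 2(2)] that(1) and_split_root(1)[OF n 2(1-4)] by auto
      show "solution_at D (kid D a) T'" "T' \<subseteq> Gp st" "is_or (kid D a)"
        using that "1.prems"(2) and_kids[OF 2(2)] by auto
    qed
    have "UB st u \<le> cost D u a + andval D (UB st) a"
      using UB_bellman[OF u(2)] val_le_cost_andch[OF \<open>a \<in> andch D (Gp st) u\<close>] by simp
    also have "\<dots> \<le> cost D u a + (sol_cost D T0 + sol_cost D T1)"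
      unfolding andval_def using kid_bound[of kid0 T0] kid_bound[of kid1 T1] 2(3-5)
      by (intro add_mono) auto
    also have "\<dots> = sol_cost D T"
      using sol_cost_split[OF n 2(1-4)] 2(5) by (simp add: add.assoc)
    finally show ?thesis .
  qed
qed

context
  fixes ch
  assumes choice: "good_choice D st ch"
begin

lemma getsol_inner_choice:
  assumes "andch D (Gp st) u \<noteq> {}"
    and "\<not> cost D u (termch u) \<le> (INF a\<in>andch D (Gp st) u. cost D u a + andval D (UB st) a)"
  shows "ch u \<in> andch D (Gp st) u" and "kid0 D (ch u) \<in> Ex st" and "kid1 D (ch u) \<in> Ex st"
    and "val D (Gp st) (UB st) u = cost D u (ch u) + andval D (UB st) (ch u)"
proof -
  let ?F = "\<lambda>a. cost D u a + andval D (UB st) a"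
  show ch: "ch u \<in> andch D (Gp st) u"
    using choice assms(1) unfolding good_choice_def by blast
  have "(INF a\<in>andch D (Gp st) u. ?F a) = ?F (ch u)"
    using choice assms(1) ch unfolding good_choice_def
    by (intro antisym INF_lower INF_greatest) auto
  then have less: "?F (ch u) < cost D u (termch u)" using assms(2) by simp
  then have "UB st (kid0 D (ch u)) \<noteq> \<infinity>" "UB st (kid1 D (ch u)) \<noteq> \<infinity>"
    by (auto simp: andval_def)
  then show "kid0 D (ch u) \<in> Ex st" "kid1 D (ch u) \<in> Ex st" using UB_unexpanded by blast+
  show "val D (Gp st) (UB st) u = ?F (ch u)"
    unfolding val_def using \<open>(INF a\<in>andch D (Gp st) u. ?F a) = ?F (ch u)\<close> less by simp
qed

lemma getsol_solution:
  "getsol D st ch u S \<Longrightarrow> u \<in> Ex st \<Longrightarrow> solution_at D u S \<and> S \<subseteq> Gp st \<and> sol_cost D S \<le> UB st u"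
proof (induction rule: getsol.induct)
  case (leaf u)
  have u: "u \<in> nodes D" "is_or u" "u \<in> Gp st" "termch u \<in> Gp st"
    using explored_nodes[OF explored_state] explored_expanded[OF explored_state]
      explored_expanded_or[OF explored_state] explored_termch[OF explored_state] leaf.prems by auto
  have "cost D u (termch u) \<le> (INF a\<in>andch D (Gp st) u. cost D u a + andval D (UB st) a)"
    using leaf.hyps by auto
  then have "val D (Gp st) (UB st) u = cost D u (termch u)"
    by (simp add: val_def min_absorb2)
  then show ?case
    using solution_at_leaf[OF n u(1,2)] u(3,4) UB_bellman[OF leaf.prems] by simp
next
  case (inner u S0 S1)
  note choice_facts = getsol_inner_choice[OF inner.hyps(1,2)]
  have ua: "edgeG D u (ch u)" "is_and (ch u)" "ch u \<in> Gp st" "u \<in> Gp st"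
    using choice_facts(1) explored_expanded[OF explored_state] inner.prems by (auto simp: andch_def)
  have S0: "solution_at D (kid0 D (ch u)) S0" "S0 \<subseteq> Gp st" "sol_cost D S0 \<le> UB st (kid0 D (ch u))"
    and S1: "solution_at D (kid1 D (ch u)) S1" "S1 \<subseteq> Gp st" "sol_cost D S1 \<le> UB st (kid1 D (ch u))"
    using inner.IH choice_facts(2,3) by auto
  have "sol_cost D ({u, ch u} \<union> S0 \<union> S1) = cost D u (ch u) + sol_cost D S0 + sol_cost D S1"
    using sol_cost_split[OF n ua(1,2) S0(1) S1(1)] .
  also have "\<dots> \<le> cost D u (ch u) + (UB st (kid0 D (ch u)) + UB st (kid1 D (ch u)))"
    unfolding add.assoc using S0(3) S1(3) by (intro add_mono) auto
  also have "\<dots> = UB st u"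
    using choice_facts(4) UB_bellman[OF inner.prems] by (simp add: andval_def)
  finally show ?case
    using solution_at_split[OF n ua(1,2) S0(1) S1(1)] ua(3,4) S0(2) S1(2) by simp
qed

lemma getsol_exists: "u \<in> Ex st \<Longrightarrow> \<exists>S. getsol D st ch u S"
proof (induction u rule: nodes_depth_induct[OF n])
  case (1 u)
  show ?case
  proof (cases "andch D (Gp st) u = {} \<or>
      cost D u (termch u) \<le> (INF a\<in>andch D (Gp st) u. cost D u a + andval D (UB st) a)")
    case True
    then show ?thesis using getsol.leaf by blast
  next
    case False
    then have ne: "andch D (Gp st) u \<noteq> {}"
      and inner:
        "\<not> cost D u (termch u) \<le> (INF a\<in>andch D (Gp st) u. cost D u a + andval D (UB st) a)"
      by auto
    note choice_facts = getsol_inner_choice[OF ne inner]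
    have "edgeG D u (ch u)" "is_and (ch u)" using choice_facts(1) by (auto simp: andch_def)
    then have "depth (kid0 D (ch u)) = Suc (depth u)" "depth (kid1 D (ch u)) = Suc (depth u)"
      using and_kids by (metis depth_or_parent edgeG_gedge gedge_into_non_or is_and_not_or)+
    moreover have "kid0 D (ch u) \<in> nodes D" "kid1 D (ch u) \<in> nodes D"
      using choice_facts(2,3) explored_nodes[OF explored_state] explored_expanded[OF explored_state]
      by auto
    ultimately obtain S0 S1
      where "getsol D st ch (kid0 D (ch u)) S0" "getsol D st ch (kid1 D (ch u)) S1"
      using "1.IH" choice_facts(2,3) by (metis lessI)
    then show ?thesis using getsol.inner[OF ne inner] by blast
  qed
qed

end

end

theorem theorem12:
  fixes N F :: nat and X :: "nat \<Rightarrow> nat \<Rightarrow> bool" and Y :: "nat \<Rightarrow> bool"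
    and r1 r0 a b :: real and st :: mt_state and ch :: "node \<Rightarrow> node"
  defines "D \<equiv> \<lparr>nN = N, fF = F, xX = X, yY = Y, rho1 = r1, rho0 = r0, alpha = a, beta = b\<rparr>"
  assumes "0 < N" and "0 < r1" and "0 < r0" and "0 < a" and "a < 1" and "0 \<le> b"
    and run: "(mt_iter D)\<^sup>+\<^sup>+ (mt_init D) st"
    and early: "LB st (root D) < UB st (root D)"
    and choice: "good_choice D st ch"
  shows "(\<exists>S. getsol D st ch (root D) S) \<and>
         (\<forall>S. getsol D st ch (root D) S \<longrightarrow>
            sol_graph D S \<and> S \<subseteq> Gp st \<and>
            (\<forall>S'. sol_graph D S' \<and> S' \<subseteq> Gp st \<longrightarrow> sol_cost D S \<le> sol_cost D S'))"
proof -
  have n: "0 < nN D" using \<open>0 < N\<close> by (simp add: D_def)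
  obtain inv: "mt_invariant D st" and root: "root D \<in> Ex st"
    using reached_invariant[OF n run] by blast
  have optimal: "sol_graph D S \<and> S \<subseteq> Gp st \<and>
      (\<forall>S'. sol_graph D S' \<and> S' \<subseteq> Gp st \<longrightarrow> sol_cost D S \<le> sol_cost D S')"
    if "getsol D st ch (root D) S" for S
  proof -
    have "solution_at D (root D) S" "S \<subseteq> Gp st" "sol_cost D S \<le> UB st (root D)"
      using getsol_solution[OF n inv choice that root] by auto
    moreover have "UB st (root D) \<le> sol_cost D S'" if "sol_graph D S'" "S' \<subseteq> Gp st" for S'
      using UB_le_sol_cost[OF n inv] that by (simp add: sol_graph_iff_solution_at root_def)
    ultimately show ?thesis by (auto simp: sol_graph_iff_solution_at intro: order.trans)
  qed
  show ?thesis using getsol_exists[OF n inv choice root] optimal by blast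
qed

end
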